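(* For $\alpha>0$ and $t\in\mathbb{R}$, let $A(\alpha)=\begin{pmatrix}-1&\alpha\\0&-1\end{pmatrix}$ and $B=\begin{pmatrix}t\\1\end{pmatrix}$, and let $X$ solve $A(\alpha)X+XA(\alpha)^*=-BB^*$, with singular values $s_1\ge s_2>0$. Then $X=\frac14\begin{pmatrix}2t^2+2\alpha t+\alpha^2 & \alpha+2t\\ \alpha+2t & 2\end{pmatrix}$, and $$\max_{t\in\mathbb{R}}\frac{s_2}{s_1}=\begin{cases}\alpha^2/4, & 0<\alpha\le 2,\\ 4/\alpha^2, & \alpha\ge 2,\end{cases}$$ with the maximum attained at $t=-\alpha/2$. *)

theory Defs
  imports "HOL-Analysis.Analysis"
begin

definition Amat :: "real \<Rightarrow> real^2^2" where
  "Amat \<alpha> = vector [vector [-1, \<alpha>], vector [0, -1]]"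

definition Bvec :: "real \<Rightarrow> real^1^2" where
  "Bvec t = vector [vector [t], vector [1]]"

text \<open>X solves the Lyapunov equation A X + X A^* = - B B^* (real matrices: A^* = transpose A).\<close>
definition lyap_sol :: "real \<Rightarrow> real \<Rightarrow> real^2^2 \<Rightarrow> bool" where
  "lyap_sol \<alpha> t X \<longleftrightarrow>
     Amat \<alpha> ** X + X ** transpose (Amat \<alpha>) = - (Bvec t ** transpose (Bvec t))"

definition singular_values :: "real^'n^'m \<Rightarrow> real set" where
  "singular_values M = {s. s \<ge> 0 \<and> (\<exists>v. v \<noteq> 0 \<and> (transpose M ** M) *v v = (s^2) *\<^sub>R v)}"

definition s_max :: "real^'n^'m \<Rightarrow> real" where
  "s_max M = Max (singular_values M)"

definition s_min :: "real^'n^'m \<Rightarrow> real" where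
  "s_min M = Min (singular_values M)"

end

theory Submission
  imports Defs
begin

(* The Lyapunov equation A X + X A^T = -B B^T is a triangular linear system
   in the entries of X; its unique solution is the symmetric matrix X = [[p, q], [q, 1/2]]
   with p = ((alpha + 2t)^2 + alpha^2)/8 and q = (alpha + 2t)/4.
   For a symmetric positive definite 2x2 matrix S the singular values are its eigenvalues,
   i.e. the two positive roots lo <= hi of z^2 - T z + D (T trace, D determinant).  Hence
   rho = lo/hi lies in (0,1] and, by Vieta, rho/(1+rho)^2 = lo*hi/(lo+hi)^2 = D/T^2.
   For the solution X, D = alpha^2/16 for every t, and D/T^2 = 4 alpha^2/N^2 with
   N = (alpha + 2t)^2 + alpha^2 + 4, which is largest exactly at t = -alpha/2, where it
   equals 4 alpha^2/(4 + alpha^2)^2 = c/(1+c)^2 for the claimed optimal ratio c.  Since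
   x |-> x/(1+x)^2 is increasing on (0,1], this gives rho <= c, with equality at t = -alpha/2.
   The file develops, in order: the explicit Lyapunov solution; kernels and definiteness of
   2x2 systems; singular values of symmetric positive definite 2x2 matrices and their ratio;
   the monotonicity comparison and the optimal ratio; the ratio for the Lyapunov solution;
   and finally the theorem. *)

text \<open>The Lyapunov equation determines X uniquely: solving the entries from the bottom
  right corner upwards gives the displayed formula.\<close>
lemma lyap_sol_iff:
  "lyap_sol a t X \<longleftrightarrow>
     X = (1/4) *\<^sub>R vector [vector [2*t^2 + 2*a*t + a^2, a + 2*t], vector [a + 2*t, 2]]"
proof -
  have "lyap_sol a t X \<longleftrightarrow>
      2*X$2$2 = 1 \<and> 2*X$1$2 = t + a*X$2$2 \<and> 2*X$2$1 = t + a*X$2$2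
      \<and> 2*X$1$1 = t*t + a*(X$1$2 + X$2$1)"
    unfolding lyap_sol_def Amat_def Bvec_def
    by (simp add: vec_eq_iff forall_2 matrix_matrix_mult_def sum_2 transpose_def vector_2
        algebra_simps) (auto simp: algebra_simps)
  also have "\<dots> \<longleftrightarrow> X$2$2 = 1/2 \<and> X$1$2 = (a + 2*t)/4 \<and> X$2$1 = (a + 2*t)/4
      \<and> X$1$1 = (2*t^2 + 2*a*t + a^2)/4" (is "?system \<longleftrightarrow> ?solution")
  proof
    assume system: ?system
    then have x22: "X$2$2 = 1/2" by simp
    with system have x12: "X$1$2 = (a + 2*t)/4" and x21: "X$2$1 = (a + 2*t)/4"
      by (auto simp: field_simps)
    from system have "2*X$1$1 = t*t + a*(X$1$2 + X$2$1)" by simp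
    then have "X$1$1 = (2*t^2 + 2*a*t + a^2)/4"
      unfolding x12 x21 by (simp add: power2_eq_square field_simps)
    with x22 x12 x21 show ?solution by blast
  next
    assume ?solution
    then show ?system by (simp add: power2_eq_square add_divide_distrib algebra_simps)
  qed
  also have "\<dots> \<longleftrightarrow>
      X = (1/4) *\<^sub>R vector [vector [2*t^2 + 2*a*t + a^2, a + 2*t], vector [a + 2*t, 2]]"
    by (auto simp: vec_eq_iff forall_2 vector_2)
  finally show ?thesis .
qed

definition sym2 :: "real \<Rightarrow> real \<Rightarrow> real \<Rightarrow> real^2^2" where
  "sym2 p q r = vector [vector [p, q], vector [q, r]]"


text \<open>A symmetric 2x2 matrix with positive leading entry and positive determinant has a
  positive definite quadratic form (completion of the square).\<close>
lemma pos_def2: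
  fixes p q r x y :: real
  assumes "p > 0" and "q^2 < p*r" and "x \<noteq> 0 \<or> y \<noteq> 0"
  shows "p*x^2 + 2*q*x*y + r*y^2 > 0"
proof -
  have square: "p*(p*x^2 + 2*q*x*y + r*y^2) = (p*x + q*y)^2 + (p*r - q^2)*y^2"
    by (simp add: power2_eq_square algebra_simps)
  have "(p*x + q*y)^2 + (p*r - q^2)*y^2 > 0"
  proof (cases "y = 0")
    case True
    with assms show ?thesis by simp
  next
    case False
    with assms(2) show ?thesis by (simp add: add_nonneg_pos)
  qed
  with square \<open>p > 0\<close> show ?thesis by (metis zero_less_mult_pos)
qed

lemma det2_vanishes:
  fixes a b c d u w :: real
  assumes "u \<noteq> 0 \<or> w \<noteq> 0" and "a*u + b*w = 0" and "c*u + d*w = 0"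
  shows "a*d - b*c = 0"
proof -
  have "(a*d - b*c)*u = d*(a*u + b*w) - b*(c*u + d*w)"
    and "(a*d - b*c)*w = a*(c*u + d*w) - c*(a*u + b*w)"
    by (simp_all add: algebra_simps)
  with assms show ?thesis by auto
qed

lemma det2_kernel:
  fixes a b c d :: real
  assumes "a*d = b*c"
  obtains x y where "x \<noteq> 0 \<or> y \<noteq> 0" and "a*x + b*y = 0" and "c*x + d*y = 0"
proof (cases "a = 0 \<and> b = 0")
  case True
  show ?thesis
  proof (cases "c = 0 \<and> d = 0")
    case True
    with \<open>a = 0 \<and> b = 0\<close> show ?thesis by (intro that[of 1 0]) simp_all
  next
    case False
    with \<open>a = 0 \<and> b = 0\<close> show ?thesis by (intro that[of d "-c"]) (auto simp: algebra_simps)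
  qed
next
  case False
  with assms show ?thesis by (intro that[of b "-a"]) (auto simp: algebra_simps)
qed

lemma sym2_gram_eigen_iff:
  fixes v :: "real^2"
  shows "(transpose (sym2 p q r) ** sym2 p q r) *v v = c *\<^sub>R v \<longleftrightarrow>
    (p*p + q*q)*(v$1) + (p*q + q*r)*(v$2) = c*(v$1) \<and>
    (p*q + q*r)*(v$1) + (q*q + r*r)*(v$2) = c*(v$2)"
  by (simp add: sym2_def vec_eq_iff forall_2 matrix_vector_mult_def matrix_matrix_mult_def
      sum_2 transpose_def vector_2 algebra_simps)

text \<open>If S^2 v = z^2 v with z >= 0,
  then u = (S + z) v satisfies (S - z) u = 0; u = 0 would make the quadratic form of S
  nonpositive at v, so u is an eigenvector and det(S - z) = 0.  Conversely an eigenvector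
  of S for z is one of S^2 for z^2.\<close>
lemma singular_values_sym2:
  fixes p q r :: real
  assumes "p > 0" and "q^2 < p*r"
  shows "singular_values (sym2 p q r) = {z. z \<ge> 0 \<and> z^2 - (p + r)*z + (p*r - q^2) = 0}"
proof (rule set_eqI, rule iffI)
  fix z
  assume "z \<in> singular_values (sym2 p q r)"
  then obtain v :: "real^2" where "z \<ge> 0" and "v \<noteq> 0"
    and eig1: "(p*p + q*q)*(v$1) + (p*q + q*r)*(v$2) = z^2*(v$1)"
    and eig2: "(p*q + q*r)*(v$1) + (q*q + r*r)*(v$2) = z^2*(v$2)"
    unfolding singular_values_def sym2_gram_eigen_iff by blast
  define x y where "x = v$1" and "y = v$2"
  have xy: "x \<noteq> 0 \<or> y \<noteq> 0"
    using \<open>v \<noteq> 0\<close> by (auto simp: x_def y_def vec_eq_iff forall_2)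
  define u w where "u = (p + z)*x + q*y" and "w = q*x + (r + z)*y"
  have ker1: "(p - z)*u + q*w = 0" and ker2: "q*u + (r - z)*w = 0"
    using eig1 eig2 by (simp_all add: u_def w_def x_def y_def power2_eq_square algebra_simps)
  have "u \<noteq> 0 \<or> w \<noteq> 0"
  proof (rule ccontr)
    assume "\<not> (u \<noteq> 0 \<or> w \<noteq> 0)"
    then have "x*u + y*w = 0" by simp
    then have "p*x^2 + 2*q*x*y + r*y^2 = - z*(x^2 + y^2)"
      by (simp add: u_def w_def power2_eq_square algebra_simps)
    moreover have "p*x^2 + 2*q*x*y + r*y^2 > 0" using pos_def2[OF assms xy] .
    moreover have "z*(x^2 + y^2) \<ge> 0" using \<open>z \<ge> 0\<close> by simp
    ultimately show False by linarith
  qed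
  from det2_vanishes[OF this ker1 ker2] \<open>z \<ge> 0\<close>
  show "z \<in> {z. z \<ge> 0 \<and> z^2 - (p + r)*z + (p*r - q^2) = 0}"
    by (simp add: power2_eq_square algebra_simps)
next
  fix z
  assume "z \<in> {z. z \<ge> 0 \<and> z^2 - (p + r)*z + (p*r - q^2) = 0}"
  then have "z \<ge> 0" and "(p - z)*(r - z) = q*q"
    by (simp_all add: power2_eq_square algebra_simps)
  then obtain x y where xy: "x \<noteq> 0 \<or> y \<noteq> 0"
    and "(p - z)*x + q*y = 0" and "q*x + (r - z)*y = 0"
    using det2_kernel by metis
  then have eig1: "p*x + q*y = z*x" and eig2: "q*x + r*y = z*y"
    by (simp_all add: algebra_simps)
  define v :: "real^2" where "v = vector [x, y]"
  have "v \<noteq> 0" using xy by (auto simp: v_def vec_eq_iff forall_2 vector_2)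
  have "(p*p + q*q)*x + (p*q + q*r)*y = p*(p*x + q*y) + q*(q*x + r*y)"
    by (simp add: algebra_simps)
  also have "\<dots> = p*(z*x) + q*(z*y)" unfolding eig1 eig2 ..
  also have "\<dots> = z*(p*x + q*y)" by (simp add: algebra_simps)
  also have "\<dots> = z^2*x" unfolding eig1 by (simp add: power2_eq_square)
  finally have gram1: "(p*p + q*q)*x + (p*q + q*r)*y = z^2*x" .
  have "(p*q + q*r)*x + (q*q + r*r)*y = q*(p*x + q*y) + r*(q*x + r*y)"
    by (simp add: algebra_simps)
  also have "\<dots> = q*(z*x) + r*(z*y)" unfolding eig1 eig2 ..
  also have "\<dots> = z*(q*x + r*y)" by (simp add: algebra_simps)
  also have "\<dots> = z^2*y" unfolding eig2 by (simp add: power2_eq_square)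
  finally have gram2: "(p*q + q*r)*x + (q*q + r*r)*y = z^2*y" .
  show "z \<in> singular_values (sym2 p q r)"
    unfolding singular_values_def sym2_gram_eigen_iff using \<open>z \<ge> 0\<close> \<open>v \<noteq> 0\<close> gram1 gram2
    by (auto simp: v_def vector_2)
qed

lemma quadratic_positive_roots:
  fixes T D :: real
  assumes "T > 0" and "D > 0" and "4*D \<le> T^2"
  defines "lo \<equiv> (T - sqrt (T^2 - 4*D))/2" and "hi \<equiv> (T + sqrt (T^2 - 4*D))/2"
  shows "{z. z \<ge> 0 \<and> z^2 - T*z + D = 0} = {lo, hi}"
    and "0 < lo" and "lo \<le> hi" and "lo*hi = D" and "lo + hi = T"
proof -
  define S where "S = sqrt (T^2 - 4*D)"
  have "S \<ge> 0" and S_sq: "S^2 = T^2 - 4*D" using assms(3) by (auto simp: S_def)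
  have "S < T"
  proof -
    have "S^2 < T^2" using S_sq \<open>D > 0\<close> by simp
    with \<open>T > 0\<close> show ?thesis by (simp add: power_less_imp_less_base)
  qed
  show "lo*hi = D" unfolding lo_def hi_def S_def[symmetric] using S_sq
    by (simp add: field_simps power2_eq_square)
  show "lo + hi = T" unfolding lo_def hi_def by (simp add: field_simps)
  show "0 < lo" unfolding lo_def S_def[symmetric] using \<open>S < T\<close> by simp
  show "lo \<le> hi" unfolding lo_def hi_def S_def[symmetric] using \<open>S \<ge> 0\<close> by simp
  have factor: "z^2 - T*z + D = (z - lo)*(z - hi)" for z
    unfolding lo_def hi_def S_def[symmetric] using S_sq by (simp add: field_simps power2_eq_square)
  have "0 \<le> lo" and "0 \<le> hi"
    unfolding lo_def hi_def S_def[symmetric] using \<open>S < T\<close> \<open>S \<ge> 0\<close> by simp_all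
  then show "{z. z \<ge> 0 \<and> z^2 - T*z + D = 0} = {lo, hi}" unfolding factor by auto
qed

text \<open>The
  discriminant condition of the quadratic holds automatically,
  (p+r)^2 - 4(pr - q^2) = (p-r)^2 + 4q^2.\<close>
lemma sym2_singular_ratio:
  fixes p q r :: real
  assumes "p > 0" and "q^2 < p*r"
  defines "S \<equiv> sym2 p q r"
  shows "0 < s_min S" and "s_min S \<le> s_max S"
    and "s_min S / s_max S \<le> 1"
    and "(s_min S / s_max S) / (1 + s_min S / s_max S)^2 = (p*r - q^2)/(p + r)^2"
proof -
  define T D where "T = p + r" and "D = p*r - q^2"
  have "r > 0"
  proof (rule ccontr)
    assume "\<not> r > 0"
    with \<open>p > 0\<close> have "p*r \<le> 0" by (simp add: mult_nonneg_nonpos)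
    with assms(2) show False by (smt (verit) zero_le_power2)
  qed
  with \<open>p > 0\<close> have "T > 0" by (simp add: T_def)
  have "D > 0" using assms(2) by (simp add: D_def)
  have "4*D \<le> T^2"
  proof -
    have "T^2 - 4*D = (p - r)^2 + 4*q^2" by (simp add: T_def D_def power2_eq_square algebra_simps)
    then show ?thesis by (smt (verit) zero_le_power2)
  qed
  define lo hi where "lo = (T - sqrt (T^2 - 4*D))/2" and "hi = (T + sqrt (T^2 - 4*D))/2"
  note roots = quadratic_positive_roots[OF \<open>T > 0\<close> \<open>D > 0\<close> \<open>4*D \<le> T^2\<close>, folded lo_def hi_def]
  have "singular_values S = {lo, hi}"
    using roots(1) unfolding S_def singular_values_sym2[OF assms(1,2)] T_def D_def by simp
  then have s_min: "s_min S = lo" and s_max: "s_max S = hi"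
    unfolding s_min_def s_max_def using roots(3) by simp_all
  show "0 < s_min S" and "s_min S \<le> s_max S" unfolding s_min s_max using roots(2,3) by simp_all
  then show "s_min S / s_max S \<le> 1" by simp
  have "hi > 0" using roots(2,3) by simp
  then show "(s_min S / s_max S) / (1 + s_min S / s_max S)^2 = (p*r - q^2)/(p + r)^2"
    unfolding s_min s_max D_def[symmetric] T_def[symmetric] roots(4)[symmetric] roots(5)[symmetric]
    by (simp add: field_simps power2_eq_square)
qed

text \<open>The map x |-> x/(1+x)^2 is increasing on (0,1], since
  y(1+x)^2 - x(1+y)^2 = (y - x)(1 - xy); so ratios in (0,1] can be compared through it.\<close>
lemma ratio_compare:
  fixes x y :: real
  assumes "0 < x" "x \<le> 1" "0 < y" "y \<le> 1" and "x/(1+x)^2 \<le> y/(1+y)^2"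
  shows "x \<le> y"
proof (rule ccontr)
  assume "\<not> x \<le> y"
  then have "y < x" by simp
  have "x*(1+y)^2 \<le> y*(1+x)^2" using assms by (simp add: field_simps)
  then have "(x - y)*(1 - x*y) \<le> 0" by (simp add: power2_eq_square algebra_simps)
  moreover have "x*y < 1"
  proof -
    have "x*y \<le> 1*y" using assms by (intro mult_right_mono) auto
    with \<open>y < x\<close> assms show ?thesis by linarith
  qed
  ultimately show False using \<open>y < x\<close> by (simp add: mult_le_0_iff)
qed

definition optimal_ratio :: "real \<Rightarrow> real" where
  "optimal_ratio a = (if a \<le> 2 then a^2/4 else 4/a^2)"

lemma optimal_ratio_props:
  fixes a :: real
  assumes "a > 0"
  shows "0 < optimal_ratio a" and "optimal_ratio a \<le> 1"
    and "optimal_ratio a / (1 + optimal_ratio a)^2 = 4*a^2/(a^2 + 4)^2"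
proof -
  show "0 < optimal_ratio a" using assms by (simp add: optimal_ratio_def)
  show "optimal_ratio a \<le> 1"
  proof (cases "a \<le> 2")
    case True
    then have "a^2 \<le> 2^2" using assms by (intro power_mono) auto
    with True show ?thesis by (simp add: optimal_ratio_def)
  next
    case False
    then have "2^2 \<le> a^2" by (intro power_mono) auto
    with False show ?thesis by (simp add: optimal_ratio_def)
  qed
  show "optimal_ratio a / (1 + optimal_ratio a)^2 = 4*a^2/(a^2 + 4)^2"
    using assms by (auto simp: optimal_ratio_def field_simps power2_eq_square)
qed

lemma lyap_solution_sym2:
  "(1/4) *\<^sub>R vector [vector [2*t^2 + 2*a*t + a^2, a + 2*t], vector [a + 2*t, 2]]
     = sym2 ((2*t^2 + 2*a*t + a^2)/4) ((a + 2*t)/4) (1/2)"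
  by (simp add: sym2_def vec_eq_iff forall_2 vector_2)

text \<open>Its determinant is a^2/16 whatever t is, so it is positive definite for a > 0, and
  det/trace^2 = 4 a^2/((a + 2t)^2 + a^2 + 4)^2 depends on t only through (a + 2t)^2.\<close>
lemma lyap_solution_invariants:
  fixes a t :: real
  assumes "a > 0"
  defines "p \<equiv> (2*t^2 + 2*a*t + a^2)/4" and "q \<equiv> (a + 2*t)/4" and "r \<equiv> 1/2"
  shows "p > 0" and "q^2 < p*r"
    and "(p*r - q^2)/(p + r)^2 = 4*a^2/((a + 2*t)^2 + a^2 + 4)^2"
proof -
  have p_eq: "p = ((a + 2*t)^2 + a^2)/8" unfolding p_def by (simp add: power2_eq_square field_simps)
  have det: "p*r - q^2 = a^2/16" unfolding p_eq q_def r_def by (simp add: power2_eq_square field_simps)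
  show "p > 0" unfolding p_eq using assms by (simp add: add_nonneg_pos)
  have "a^2/16 > 0" using assms by simp
  with det show "q^2 < p*r" by linarith
  define N where "N = (a + 2*t)^2 + a^2 + 4"
  have "N > 0" unfolding N_def by (simp add: add_nonneg_pos)
  have trace: "p + r = N/8" unfolding p_eq r_def N_def by simp
  show "(p*r - q^2)/(p + r)^2 = 4*a^2/((a + 2*t)^2 + a^2 + 4)^2"
    unfolding det trace N_def[symmetric] using \<open>N > 0\<close> by (simp add: power2_eq_square field_simps)
qed

lemma lyap_solution_ratio:
  fixes a t :: real
  assumes "a > 0"
  defines "X \<equiv> sym2 ((2*t^2 + 2*a*t + a^2)/4) ((a + 2*t)/4) (1/2)"
  shows "0 < s_min X" and "s_min X \<le> s_max X"
    and "s_min X / s_max X \<le> optimal_ratio a"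
    and "t = -a/2 \<Longrightarrow> s_min X / s_max X = optimal_ratio a"
proof -
  note inv = lyap_solution_invariants[OF assms(1), of t]
  note sv = sym2_singular_ratio[OF inv(1,2), folded X_def]
  define \<rho> where "\<rho> = s_min X / s_max X"
  have "0 < \<rho>" and "\<rho> \<le> 1" using sv(1-3) by (simp_all add: \<rho>_def)
  have \<rho>_quot: "\<rho>/(1 + \<rho>)^2 = 4*a^2/((a + 2*t)^2 + a^2 + 4)^2"
    unfolding \<rho>_def sv(4) inv(3) ..
  note opt = optimal_ratio_props[OF assms(1)]
  show "0 < s_min X" and "s_min X \<le> s_max X" using sv(1,2) .
  have "0 < a^2 + 4" and "0 < (a + 2*t)^2 + a^2 + 4" by (simp_all add: add_nonneg_pos)
  moreover have "(a^2 + 4)^2 \<le> ((a + 2*t)^2 + a^2 + 4)^2" by (intro power_mono) auto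
  ultimately have "4*a^2/((a + 2*t)^2 + a^2 + 4)^2 \<le> 4*a^2/(a^2 + 4)^2"
    by (intro divide_left_mono mult_pos_pos) simp_all
  then have "\<rho> \<le> optimal_ratio a"
    using ratio_compare[OF \<open>0 < \<rho>\<close> \<open>\<rho> \<le> 1\<close> opt(1,2)] \<rho>_quot opt(3) by simp
  then show "s_min X / s_max X \<le> optimal_ratio a" by (simp add: \<rho>_def)
  assume "t = -a/2"
  then have "\<rho>/(1 + \<rho>)^2 = optimal_ratio a / (1 + optimal_ratio a)^2"
    unfolding \<rho>_quot opt(3) by simp
  then have "optimal_ratio a \<le> \<rho>"
    using ratio_compare[OF opt(1,2) \<open>0 < \<rho>\<close> \<open>\<rho> \<le> 1\<close>] by simp
  with \<open>\<rho> \<le> optimal_ratio a\<close> show "s_min X / s_max X = optimal_ratio a" by (simp add: \<rho>_def)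
qed

theorem mainTheorem5:
  fixes \<alpha> :: real
  assumes "\<alpha> > 0"
  shows "(\<forall>t. \<exists>X. lyap_sol \<alpha> t X)
   \<and> (\<forall>t X. lyap_sol \<alpha> t X \<longrightarrow>
        X = (1/4) *\<^sub>R vector [vector [2*t^2 + 2*\<alpha>*t + \<alpha>^2, \<alpha> + 2*t],
                                   vector [\<alpha> + 2*t, 2]]
        \<and> s_max X \<ge> s_min X \<and> s_min X > 0)
   \<and> (\<forall>t X. lyap_sol \<alpha> t X \<longrightarrow>
        s_min X / s_max X \<le> (if \<alpha> \<le> 2 then \<alpha>^2/4 else 4/\<alpha>^2))
   \<and> (\<exists>X. lyap_sol \<alpha> (-\<alpha>/2) X \<and>
        s_min X / s_max X = (if \<alpha> \<le> 2 then \<alpha>^2/4 else 4/\<alpha>^2))"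
proof -
  note solution = lyap_sol_iff[of \<alpha>]
  note ratio = lyap_solution_ratio[OF assms, folded lyap_solution_sym2]
  show ?thesis
    unfolding optimal_ratio_def[symmetric] solution
    using ratio by blast
qed

end
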